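(* Let $\Sigma$ be a finite set of actions and consider KAT expressions over $\Sigma$ with the empty set of primitive tests. The deterministic fragment of KA is generated by sequential composition together with the constants $\mathsf{true}$ and $\mathsf{false}$: every term built from actions $p\in\Sigma$, $\mathsf{true}$ and $\mathsf{false}$ using $\cdot$ is deterministic, and for every deterministic $e\in\mathsf{KAT}(\Sigma,\emptyset)$ there is such a term $f$ with $L(f)=L(e)$.
   Context: $\mathsf{BA}(\emptyset)$: variable-free Boolean expressions $b::=\mathsf{false}\mid\mathsf{true}\mid b\vee c\mid b\wedge c\mid\overline b$. $\mathsf{KAT}(\Sigma,\emptyset)$ (KA-terms): $e::=b\mid p\in\Sigma\mid e+f\mid e\cdot f\mid e^*$. There is one atom, $\mathsf{At}_\emptyset=\{\emptyset\}$; guarded strings are words in $\mathsf{At}(\Sigma\mathsf{At})^*$. $w'\alpha\diamond\alpha x'=w'\alpha x'$; $L\diamond K=\{w\diamond x:w\in L,x\in K\}$; $L^{(0)}=\mathsf{At}$, $L^{(n+1)}=L\diamond L^{(n)}$, $L^{( * )}=\bigcup_nL^{(n)}$. $L(b)=\{\emptyset\}$ if $b$ evaluates to true and $\emptyset$ otherwise, $L(p)=\{\alpha p\beta\}$, $L(e+f)=L(e)\cup L(f)$, $L(ef)=L(e)\diamond L(f)$, $L(e^* )=L(e)^{( * )}$. An expression $e$ is deterministic if $L(e)$ is deterministic: for distinct $w,w'\in L(e)$, $w$ is not a proper prefix of $w'$ and the first position where they differ is an atom (equivalently, its relational interpretation is a partial function whenever each action is interpreted as a partial function). *)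

theory Defs
  imports Main
begin

datatype bexp = BFalse | BTrue | BOr bexp bexp | BAnd bexp bexp | BNot bexp

fun beval :: "bexp \<Rightarrow> bool" where
  "beval BFalse = False"
| "beval BTrue = True"
| "beval (BOr b c) = (beval b \<or> beval c)"
| "beval (BAnd b c) = (beval b \<and> beval c)"
| "beval (BNot b) = (\<not> beval b)"

datatype 'a kat = Test bexp | Prim 'a | Plus "'a kat" "'a kat"
  | Seq "'a kat" "'a kat" | Star "'a kat"

(* Letters of guarded strings: the unique atom (the empty set of tests) or an action *)
datatype 'a gsym = Atom | Act 'a

type_synonym 'a gstring = "'a gsym list"

definition At :: "'a gstring set" where
  "At = {[Atom]}"

definition fuse :: "'a gstring set \<Rightarrow> 'a gstring set \<Rightarrow> 'a gstring set" where
  "fuse L K = {butlast w @ x | w x. w \<in> L \<and> x \<in> K \<and> w \<noteq> [] \<and> x \<noteq> []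
                                  \<and> last w = hd x}"

fun fpow :: "'a gstring set \<Rightarrow> nat \<Rightarrow> 'a gstring set" where
  "fpow L 0 = At"
| "fpow L (Suc n) = fuse L (fpow L n)"

definition fstar :: "'a gstring set \<Rightarrow> 'a gstring set" where
  "fstar L = (\<Union>n. fpow L n)"

fun lang :: "'a kat \<Rightarrow> 'a gstring set" where
  "lang (Test b) = (if beval b then At else {})"
| "lang (Prim p) = {[Atom, Act p, Atom]}"
| "lang (Plus e f) = lang e \<union> lang f"
| "lang (Seq e f) = fuse (lang e) (lang f)"
| "lang (Star e) = fstar (lang e)"

definition deterministic_lang :: "'a gstring set \<Rightarrow> bool" where
  "deterministic_lang L \<longleftrightarrow>
     (\<forall>w\<in>L. \<forall>w'\<in>L. w \<noteq> w' \<longrightarrow>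
        \<not> (\<exists>v. v \<noteq> [] \<and> w' = w @ v) \<and>
        (\<forall>i. i < length w \<and> i < length w' \<and> w ! i \<noteq> w' ! i
              \<and> (\<forall>j<i. w ! j = w' ! j) \<longrightarrow> w ! i = Atom))"

definition deterministic :: "'a kat \<Rightarrow> bool" where
  "deterministic e \<longleftrightarrow> deterministic_lang (lang e)"

inductive det_frag :: "'a kat \<Rightarrow> bool" where
  "det_frag (Test BTrue)"
| "det_frag (Test BFalse)"
| "det_frag (Prim p)"
| "det_frag e \<Longrightarrow> det_frag f \<Longrightarrow> det_frag (Seq e f)"

end

theory Submission
  imports Defs "HOL-Library.Sublist"
begin

text \<open>With no primitive tests there is a single atom, so every guarded string alternates
  between the atom (at even positions) and actions (at odd positions). Two distinct guarded
  strings are therefore either prefix-related or first differ at an action, and both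
  situations are forbidden in a deterministic language: a deterministic language contains at
  most one string. Conversely, terms of the fragment denote at most one string, and each
  guarded string is denoted by the product of its actions.\<close>

inductive_set guarded_strings :: "'a gstring set" where
  atom: "[Atom] \<in> guarded_strings"
| action: "w \<in> guarded_strings \<Longrightarrow> Atom # Act p # w \<in> guarded_strings"

lemma guarded_strings_not_Nil: "w \<in> guarded_strings \<Longrightarrow> w \<noteq> []"
  by (induction rule: guarded_strings.induct) auto

lemma hd_guarded_strings: "w \<in> guarded_strings \<Longrightarrow> hd w = Atom"
  by (induction rule: guarded_strings.induct) auto

lemma nth_guarded_strings_eq_Atom_iff:
  "w \<in> guarded_strings \<Longrightarrow> i < length w \<Longrightarrow> w ! i = Atom \<longleftrightarrow> even i"
proof (induction arbitrary: i rule: guarded_strings.induct)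
  case atom
  then show ?case by simp
next
  case (action w p)
  show ?case
  proof (cases i)
    case (Suc j)
    with action show ?thesis by (cases j) auto
  qed simp
qed

lemma butlast_append_guarded_strings:
  "w \<in> guarded_strings \<Longrightarrow> x \<in> guarded_strings \<Longrightarrow> butlast w @ x \<in> guarded_strings"
proof (induction rule: guarded_strings.induct)
  case atom
  then show ?case by simp
next
  case (action w p)
  then show ?case
    using guarded_strings_not_Nil[of w] by (simp add: guarded_strings.action)
qed

lemma fuse_subset_guarded_strings:
  "L \<subseteq> guarded_strings \<Longrightarrow> K \<subseteq> guarded_strings \<Longrightarrow> fuse L K \<subseteq> guarded_strings"
  by (auto simp: fuse_def intro: butlast_append_guarded_strings)

lemma fpow_subset_guarded_strings: "L \<subseteq> guarded_strings \<Longrightarrow> fpow L n \<subseteq> guarded_strings"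
  by (induction n) (simp_all add: At_def guarded_strings.atom fuse_subset_guarded_strings)

lemma lang_subset_guarded_strings: "lang e \<subseteq> guarded_strings"
proof (induction e)
  case (Prim p)
  show ?case by (auto intro: guarded_strings.intros)
next
  case (Star e)
  then show ?case by (auto simp: fstar_def dest: fpow_subset_guarded_strings)
next
  case (Seq e f)
  then show ?case by (simp add: fuse_subset_guarded_strings)
qed (auto simp: At_def guarded_strings.atom)

lemma deterministic_lang_subset_singleton: "L \<subseteq> {w} \<Longrightarrow> deterministic_lang L"
  by (auto simp: deterministic_lang_def)

lemma deterministic_lang_guarded_strings_eq:
  assumes guarded: "L \<subseteq> guarded_strings" and det: "deterministic_lang L"
    and "w \<in> L" "w' \<in> L"
  shows "w = w'"
proof -
  have prefix_eq: "u = u'" if "u \<in> L" "u' \<in> L" "prefix u u'" for u u'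
  proof (rule ccontr)
    assume "u \<noteq> u'"
    then have "\<not> (\<exists>v. v \<noteq> [] \<and> u' = u @ v)"
      using det that unfolding deterministic_lang_def by blast
    with \<open>prefix u u'\<close> \<open>u \<noteq> u'\<close> show False
      by (auto simp: prefix_def)
  qed
  consider "prefix w w'" | "prefix w' w" | "w \<parallel> w'"
    by (auto simp: parallel_def)
  then show ?thesis
  proof cases
    case 1
    then show ?thesis using prefix_eq assms(3,4) by blast
  next
    case 2
    then show ?thesis using prefix_eq assms(3,4) by (blast intro: sym)
  next
    case 3
    then obtain as b bs c cs where "b \<noteq> c" and w: "w = as @ b # bs" and w': "w' = as @ c # cs"
      using parallel_decomp by blast
    let ?i = "length as"
    have "w \<noteq> w'"
      using \<open>b \<noteq> c\<close> unfolding w w' by simp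
    have "\<forall>i. i < length w \<and> i < length w' \<and> w ! i \<noteq> w' ! i \<and> (\<forall>j<i. w ! j = w' ! j)
        \<longrightarrow> w ! i = Atom"
      using det \<open>w \<in> L\<close> \<open>w' \<in> L\<close> \<open>w \<noteq> w'\<close> unfolding deterministic_lang_def by blast
    moreover have "?i < length w \<and> ?i < length w' \<and> w ! ?i \<noteq> w' ! ?i \<and> (\<forall>j<?i. w ! j = w' ! j)"
      using \<open>b \<noteq> c\<close> unfolding w w' by (simp add: nth_append)
    ultimately have "w ! ?i = Atom" by blast
    \<comment> \<open>the first difference sits at an even position of both strings, where both carry the atom\<close>
    moreover have "w \<in> guarded_strings" "w' \<in> guarded_strings"
      using guarded \<open>w \<in> L\<close> \<open>w' \<in> L\<close> by auto
    moreover have "?i < length w" "?i < length w'"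
      unfolding w w' by simp_all
    ultimately have "w' ! ?i = Atom"
      by (simp add: nth_guarded_strings_eq_Atom_iff)
    with \<open>w ! ?i = Atom\<close> \<open>b \<noteq> c\<close> show ?thesis
      unfolding w w' by simp
  qed
qed

lemma fuse_subset_singleton: "L \<subseteq> {w} \<Longrightarrow> K \<subseteq> {x} \<Longrightarrow> fuse L K \<subseteq> {butlast w @ x}"
  by (auto simp: fuse_def)

lemma det_frag_lang_subset_singleton: "det_frag e \<Longrightarrow> \<exists>w. lang e \<subseteq> {w}"
proof (induction rule: det_frag.induct)
  case (4 e f)
  then show ?case by (auto dest: fuse_subset_singleton)
qed (auto simp: At_def)

lemma det_frag_of_guarded_strings: "w \<in> guarded_strings \<Longrightarrow> \<exists>f. det_frag f \<and> lang f = {w}"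
proof (induction rule: guarded_strings.induct)
  case atom
  have "lang (Test BTrue) = {[Atom]}" by (simp add: At_def)
  then show ?case by (blast intro: det_frag.intros)
next
  case (action w p)
  then obtain f where "det_frag f" "lang f = {w}" by blast
  moreover have "fuse {[Atom, Act p, Atom]} {w} = {Atom # Act p # w}"
    using guarded_strings_not_Nil[OF action.hyps] hd_guarded_strings[OF action.hyps]
    by (auto simp: fuse_def)
  ultimately have "det_frag (Seq (Prim p) f) \<and> lang (Seq (Prim p) f) = {Atom # Act p # w}"
    by (simp add: det_frag.intros)
  then show ?case by blast
qed

theorem theorem7p4:
  shows "(\<forall>e :: ('a::finite) kat. det_frag e \<longrightarrow> deterministic e) \<and>
         (\<forall>e :: ('a::finite) kat. deterministic e \<longrightarrow> (\<exists>f. det_frag f \<and> lang f = lang e))"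
proof (intro conjI allI impI)
  fix e :: "'a kat"
  assume "det_frag e"
  then show "deterministic e"
    unfolding deterministic_def
    using det_frag_lang_subset_singleton deterministic_lang_subset_singleton by blast
next
  fix e :: "'a kat"
  assume "deterministic e"
  then have unique: "w = w'" if "w \<in> lang e" "w' \<in> lang e" for w w'
    using deterministic_lang_guarded_strings_eq[OF lang_subset_guarded_strings] that
    unfolding deterministic_def by blast
  show "\<exists>f. det_frag f \<and> lang f = lang e"
  proof (cases "lang e = {}")
    case True
    then show ?thesis by (auto intro: det_frag.intros)
  next
    case False
    then obtain w where "lang e = {w}" using unique by blast
    then show ?thesis
      using det_frag_of_guarded_strings lang_subset_guarded_strings by (metis insert_subset)
  qed
qed

end
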